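(* Let $\varphi$ be a mean on $L^{\infty}(\mathbb{R}_+)$. Then $\varphi\in\mathcal{M}_1$ if and only if $\varphi(f-Sf)=0$ for every $f\in L^{\infty}(\mathbb{R}_+)$, i.e. if and only if $\varphi$ vanishes on $\Phi'=\{f-Sf : f\in L^{\infty}(\mathbb{R}_+)\}$; equivalently, $\varphi\in\mathcal{M}_1$ if and only if $\varphi(Sf)=\varphi(f)$ for all $f\in L^{\infty}(\mathbb{R}_+)$.
   Context: $\mathbb{R}_+=[0,\infty)$ and $L^{\infty}(\mathbb{R}_+)$ is the Banach space of real-valued essentially bounded measurable functions on $\mathbb{R}_+$, ordered by $f\ge0$ a.e. A mean on $L^{\infty}(\mathbb{R}_+)$ is a linear functional $\varphi$ with $\varphi(f)\ge 0$ whenever $f\ge0$ and $\varphi(1)=1$. Define $\overline{M}_1(f)=\lim_{\theta\to\infty}\limsup_{x\to\infty}\frac{1}{\theta}\int_x^{x+\theta}f(t)\,dt$, and let $\mathcal{M}_1$ be the set of means $\varphi$ on $L^{\infty}(\mathbb{R}_+)$ with $\varphi(f)\le\overline{M}_1(f)$ for all $f\in L^{\infty}(\mathbb{R}_+)$. The operator $S:L^{\infty}(\mathbb{R}_+)\to L^{\infty}(\mathbb{R}_+)$ is $(Sf)(x)=e^{-x}\int_0^x f(t)e^t\,dt$. *)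

theory Defs
  imports "HOL-Analysis.Analysis"
begin

text \<open>L-infinity on R_+ represented by measurable functions real => real that are
  essentially bounded on [0,infinity); values on negative reals are irrelevant.
  Elements equal a.e. on [0,infinity) are identified implicitly: positivity of a mean
  forces it to agree on them.\<close>

definition Linf :: "(real \<Rightarrow> real) set" where
  "Linf = {f. f \<in> borel_measurable lborel \<and>
              (\<exists>C. AE x in lborel. x \<ge> 0 \<longrightarrow> \<bar>f x\<bar> \<le> C)}"

definition is_mean :: "((real \<Rightarrow> real) \<Rightarrow> real) \<Rightarrow> bool" where
  "is_mean \<phi> \<longleftrightarrow>
     (\<forall>f\<in>Linf. \<forall>g\<in>Linf. \<forall>a b::real. \<phi> (\<lambda>x. a * f x + b * g x) = a * \<phi> f + b * \<phi> g) \<and>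
     (\<forall>f\<in>Linf. (AE x in lborel. x \<ge> 0 \<longrightarrow> f x \<ge> 0) \<longrightarrow> \<phi> f \<ge> 0) \<and>
     \<phi> (\<lambda>x. 1) = 1"

definition M1_upper :: "(real \<Rightarrow> real) \<Rightarrow> real" where
  "M1_upper f = Lim at_top (\<lambda>\<theta>::real. real_of_ereal
      (Limsup at_top (\<lambda>x::real. ereal ((1 / \<theta>) * (LINT t:{x..x+\<theta>}|lborel. f t)))))"

definition M1 :: "((real \<Rightarrow> real) \<Rightarrow> real) set" where
  "M1 = {\<phi>. is_mean \<phi> \<and> (\<forall>f\<in>Linf. \<phi> f \<le> M1_upper f)}"

definition S_op :: "(real \<Rightarrow> real) \<Rightarrow> real \<Rightarrow> real" where
  "S_op f = (\<lambda>x. exp (- x) * (LINT t:{0..x}|lborel. f t * exp t))"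

end

theory Submission
  imports Defs
begin

text \<open>
  Since \<open>\<integral>\<^sub>0\<^sup>b (f - S f) = S f b\<close>, the window averages of \<open>f - S f\<close> over \<open>[x, x + \<theta>]\<close> are
  \<open>O(1/\<theta>)\<close>; hence \<open>M1_upper\<close> vanishes on \<open>\<plusminus>(f - S f)\<close> and every \<open>\<phi> \<in> M1\<close> kills \<open>f - S f\<close>.

  Conversely, a mean killing all \<open>f - S f\<close> kills \<open>1 - S 1 = e\<^sup>-\<^sup>x\<close>, so it only sees the
  behaviour of a function at infinity and is bounded by \<open>limsup\<close>. Moreover \<open>f - A\<^sub>\<theta> f\<close>, where \<open>A\<^sub>\<theta> f\<close> is the
  window average of width \<open>\<theta>\<close>, is of the form \<open>h - S h\<close> with \<open>h\<close> bounded, so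
  \<open>\<phi> f = \<phi> (A\<^sub>\<theta> f) \<le> limsup A\<^sub>\<theta> f\<close> for every \<open>\<theta>\<close>. The function \<open>\<theta> \<mapsto> \<theta> limsup A\<^sub>\<theta> f\<close> is
  subadditive, so by Fekete's lemma \<open>limsup A\<^sub>\<theta> f\<close> converges to \<open>M1_upper f\<close> as \<open>\<theta> \<rightarrow> \<infinity>\<close>.
\<close>

lemma LinfE:
  assumes "f \<in> Linf"
  obtains C where "C \<ge> 0" "AE x in lborel. x \<ge> 0 \<longrightarrow> \<bar>f x\<bar> \<le> C"
proof -
  from assms obtain C where C: "AE x in lborel. x \<ge> 0 \<longrightarrow> \<bar>f x\<bar> \<le> C"
    unfolding Linf_def by auto
  have "AE x in lborel. x \<ge> 0 \<longrightarrow> \<bar>f x\<bar> \<le> max C 0"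
    using C by eventually_elim auto
  then show ?thesis using that[of "max C 0"] by auto
qed

lemma Linf_measurable: "f \<in> Linf \<Longrightarrow> f \<in> borel_measurable lborel"
  unfolding Linf_def by auto

lemma LinfI_AE:
  assumes "f \<in> borel_measurable lborel" "AE x in lborel. x \<ge> 0 \<longrightarrow> \<bar>f x\<bar> \<le> C"
  shows "f \<in> Linf"
  using assms unfolding Linf_def by auto

lemma LinfI:
  assumes "f \<in> borel_measurable lborel" "\<And>x. x \<ge> 0 \<Longrightarrow> \<bar>f x\<bar> \<le> C"
  shows "f \<in> Linf"
  using assms by (intro LinfI_AE) auto

lemma Linf_lincomb:
  assumes "f \<in> Linf" "g \<in> Linf"
  shows "(\<lambda>x. a * f x + b * g x) \<in> Linf"
proof -
  obtain C where C: "AE x in lborel. x \<ge> 0 \<longrightarrow> \<bar>f x\<bar> \<le> C" using LinfE[OF assms(1)] by blast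
  obtain D where D: "AE x in lborel. x \<ge> 0 \<longrightarrow> \<bar>g x\<bar> \<le> D" using LinfE[OF assms(2)] by blast
  have "AE x in lborel. x \<ge> 0 \<longrightarrow> \<bar>a * f x + b * g x\<bar> \<le> \<bar>a\<bar> * C + \<bar>b\<bar> * D"
    using C D
  proof eventually_elim
    case (elim x)
    have "\<bar>a * f x + b * g x\<bar> \<le> \<bar>a\<bar> * \<bar>f x\<bar> + \<bar>b\<bar> * \<bar>g x\<bar>"
      by (metis abs_mult abs_triangle_ineq)
    also have "\<dots> \<le> \<bar>a\<bar> * C + \<bar>b\<bar> * D" if "x \<ge> 0"
      using elim that by (intro add_mono mult_left_mono) auto
    finally show ?case by blast
  qed
  moreover have "(\<lambda>x. a * f x + b * g x) \<in> borel_measurable lborel"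
    using Linf_measurable[OF assms(1)] Linf_measurable[OF assms(2)] by measurable
  ultimately show ?thesis by (intro LinfI_AE)
qed

lemma Linf_const: "(\<lambda>x. c) \<in> Linf"
  by (rule LinfI[of _ "\<bar>c\<bar>"]) auto

lemma Linf_diff: "f \<in> Linf \<Longrightarrow> g \<in> Linf \<Longrightarrow> (\<lambda>x. f x - g x) \<in> Linf"
  using Linf_lincomb[of f g 1 "-1"] by simp

lemma Linf_add: "f \<in> Linf \<Longrightarrow> g \<in> Linf \<Longrightarrow> (\<lambda>x. f x + g x) \<in> Linf"
  using Linf_lincomb[of f g 1 1] by simp

lemma Linf_scale: "f \<in> Linf \<Longrightarrow> (\<lambda>x. a * f x) \<in> Linf"
  using Linf_lincomb[of f f a 0] by simp

lemma Linf_uminus: "f \<in> Linf \<Longrightarrow> (\<lambda>x. - f x) \<in> Linf"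
  using Linf_lincomb[of f f "-1" 0] by simp

lemma Linf_exp_minus: "(\<lambda>x. exp (- x)) \<in> Linf"
  by (rule LinfI[of _ 1]) auto

locale Linf_mean =
  fixes \<phi> :: "(real \<Rightarrow> real) \<Rightarrow> real"
  assumes is_mean: "is_mean \<phi>"
begin

lemma mean_lincomb:
  "f \<in> Linf \<Longrightarrow> g \<in> Linf \<Longrightarrow> \<phi> (\<lambda>x. a * f x + b * g x) = a * \<phi> f + b * \<phi> g"
  using is_mean unfolding is_mean_def by blast

lemma mean_nonneg: "f \<in> Linf \<Longrightarrow> (AE x in lborel. x \<ge> 0 \<longrightarrow> f x \<ge> 0) \<Longrightarrow> \<phi> f \<ge> 0"
  using is_mean unfolding is_mean_def by blast

lemma mean_diff: "f \<in> Linf \<Longrightarrow> g \<in> Linf \<Longrightarrow> \<phi> (\<lambda>x. f x - g x) = \<phi> f - \<phi> g"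
  using mean_lincomb[of f g 1 "-1"] by simp

lemma mean_add: "f \<in> Linf \<Longrightarrow> g \<in> Linf \<Longrightarrow> \<phi> (\<lambda>x. f x + g x) = \<phi> f + \<phi> g"
  using mean_lincomb[of f g 1 1] by simp

lemma mean_scale: "f \<in> Linf \<Longrightarrow> \<phi> (\<lambda>x. a * f x) = a * \<phi> f"
  using mean_lincomb[of f f a 0] by simp

lemma mean_uminus: "f \<in> Linf \<Longrightarrow> \<phi> (\<lambda>x. - f x) = - \<phi> f"
  using mean_lincomb[of f f "-1" 0] by simp

lemma mean_const: "\<phi> (\<lambda>x. c) = c"
  using mean_scale[OF Linf_const[of 1], of c] is_mean unfolding is_mean_def by simp

lemma mean_mono:
  assumes "f \<in> Linf" "g \<in> Linf" "AE x in lborel. x \<ge> 0 \<longrightarrow> f x \<le> g x"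
  shows "\<phi> f \<le> \<phi> g"
proof -
  have "\<phi> (\<lambda>x. g x - f x) \<ge> 0"
    using assms by (intro mean_nonneg Linf_diff) (auto elim!: eventually_mono)
  then show ?thesis using mean_diff[OF assms(2,1)] by simp
qed

lemma mean_cong:
  assumes "f \<in> Linf" "g \<in> Linf" "\<And>x. x \<ge> 0 \<Longrightarrow> f x = g x"
  shows "\<phi> f = \<phi> g"
  using mean_mono[OF assms(1,2)] mean_mono[OF assms(2,1)] assms(3) by (simp add: order_antisym)

end

lemma set_integrable_continuous_mult_Linf:
  assumes f: "f \<in> Linf" and K: "continuous_on UNIV K" and a: "0 \<le> a"
  shows "set_integrable lborel {a..b} (\<lambda>s. K s * f s)"
proof -
  obtain C where C: "C \<ge> 0" "AE x in lborel. x \<ge> 0 \<longrightarrow> \<bar>f x\<bar> \<le> C" using LinfE[OF f] by blast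
  have "bounded (K ` {a..b})"
    by (intro compact_imp_bounded compact_continuous_image continuous_on_subset[OF K]) auto
  then obtain M where M: "\<forall>x\<in>{a..b}. \<bar>K x\<bar> \<le> M" by (auto simp: bounded_iff)
  show ?thesis unfolding set_integrable_def
  proof (rule integrableI_bounded_set_indicator[where B="M * C"])
    show "(\<lambda>s. K s * f s) \<in> borel_measurable lborel"
      using borel_measurable_continuous_onI[OF K] Linf_measurable[OF f] by measurable
    show "AE x in lborel. x \<in> {a..b} \<longrightarrow> norm (K x * f x) \<le> M * C"
      using C(2) by eventually_elim (use M a in \<open>auto simp: abs_mult intro!: mult_mono'\<close>)
  qed (auto simp: emeasure_lborel_Icc_eq)
qed

lemma set_integrable_Linf: "f \<in> Linf \<Longrightarrow> 0 \<le> a \<Longrightarrow> set_integrable lborel {a..b} f"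
  using set_integrable_continuous_mult_Linf[of f "\<lambda>_. 1" a b] by simp

lemma set_integral_weighted_abs_le:
  assumes f: "f \<in> Linf" and C: "AE x in lborel. x \<ge> 0 \<longrightarrow> \<bar>f x\<bar> \<le> C"
    and w: "continuous_on UNIV w" "\<And>x. w x \<ge> 0" and a: "0 \<le> a"
  shows "\<bar>LINT s:{a..b}|lborel. w s * f s\<bar> \<le> C * (LINT s:{a..b}|lborel. w s)"
proof -
  have wf: "set_integrable lborel {a..b} (\<lambda>s. w s * f s)"
    by (rule set_integrable_continuous_mult_Linf[OF f w(1) a])
  have "set_integrable lborel {a..b} w"
    by (rule borel_integrable_atLeastAtMost') (rule continuous_on_subset[OF w(1)], auto)
  then have Cw: "set_integrable lborel {a..b} (\<lambda>s. C * w s)" by auto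
  have "\<bar>LINT s:{a..b}|lborel. w s * f s\<bar> \<le> (LINT s:{a..b}|lborel. \<bar>w s * f s\<bar>)"
    using set_integral_norm_bound[OF wf] by simp
  also have "\<dots> \<le> (LINT s:{a..b}|lborel. C * w s)"
  proof (rule set_integral_mono_AE[OF set_integrable_abs[OF wf] Cw])
    show "AE x\<in>{a..b} in lborel. \<bar>w x * f x\<bar> \<le> C * w x"
      using C
    proof eventually_elim
      case (elim x)
      have "w x * \<bar>f x\<bar> \<le> w x * C" if "x \<in> {a..b}"
        using elim a w(2)[of x] that by (intro mult_left_mono) auto
      moreover have "\<bar>w x * f x\<bar> = w x * \<bar>f x\<bar>" using w(2)[of x] by (simp add: abs_mult)
      ultimately show ?case by (metis mult.commute)
    qed
  qed
  finally show ?thesis by simp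
qed

lemma set_integral_Icc_FTC:
  fixes a b :: real
  assumes "a \<le> b"
    and "\<And>x. x \<in> {a..b} \<Longrightarrow> (G has_real_derivative g x) (at x within {a..b})"
    and "continuous_on {a..b} g"
  shows "(LINT x:{a..b}|lborel. g x) = G b - G a"
proof -
  have "(LBINT x=a..b. g x) = G b - G a"
    by (rule interval_integral_FTC_finite)
       (use assms in \<open>auto simp: has_real_derivative_iff_has_vector_derivative[symmetric]\<close>)
  then show ?thesis using interval_integral_Icc[OF assms(1), of g] by metis
qed

lemma set_integral_Icc_split:
  fixes f :: "real \<Rightarrow> real"
  assumes f: "set_integrable lborel {a..c} f" and "a \<le> b" "b \<le> c"
  shows "(LINT x:{a..c}|lborel. f x) = (LINT x:{a..b}|lborel. f x) + (LINT x:{b..c}|lborel. f x)"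
proof -
  have "set_integrable lborel {a..b} f" "set_integrable lborel {b..c} f"
    by (rule set_integrable_subset[OF f]; use assms in auto)+
  then show ?thesis
    using set_borel_integral_eq_integral f assms Henstock_Kurzweil_Integration.integral_combine
    by metis
qed

lemma LINT_exp: "(a::real) \<le> b \<Longrightarrow> (LINT t:{a..b}|lborel. exp t) = exp b - exp a"
  by (rule set_integral_Icc_FTC) (auto intro!: derivative_eq_intros continuous_intros)

lemma LINT_exp_minus:
  assumes "(a::real) \<le> b"
  shows "(LINT t:{a..b}|lborel. exp (- t)) = exp (- a) - exp (- b)"
proof -
  have "(LINT t:{a..b}|lborel. exp (- t)) = - exp (- b) - - exp (- a)"
    by (rule set_integral_Icc_FTC) (use assms in \<open>auto intro!: derivative_eq_intros continuous_intros\<close>)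
  then show ?thesis by simp
qed

lemma borel_measurable_set_integral_Icc:
  fixes g l u :: "real \<Rightarrow> real"
  assumes [measurable]: "g \<in> borel_measurable lborel" "l \<in> borel_measurable lborel"
    "u \<in> borel_measurable lborel"
  shows "(\<lambda>x. LINT t:{l x..u x}|lborel. g t) \<in> borel_measurable lborel"
proof -
  have "(\<lambda>(x, t). if l x \<le> t \<and> t \<le> u x then g t else 0) \<in> borel_measurable (lborel \<Otimes>\<^sub>M lborel)"
    by measurable
  then have "(\<lambda>x. \<integral>t. (if l x \<le> t \<and> t \<le> u x then g t else 0) \<partial>lborel) \<in> borel_measurable lborel"
    by (rule lborel.borel_measurable_lebesgue_integral)
  also have "(\<lambda>x. \<integral>t. (if l x \<le> t \<and> t \<le> u x then g t else 0) \<partial>lborel)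
           = (\<lambda>x. LINT t:{l x..u x}|lborel. g t)"
    unfolding set_lebesgue_integral_def
    by (intro ext Bochner_Integration.integral_cong) (auto split: split_indicator)
  finally show ?thesis .
qed

lemma integrable_triangle_indicator:
  fixes g K L :: "real \<Rightarrow> real"
  assumes g[measurable]: "g \<in> borel_measurable lborel" and gb: "\<And>s. \<bar>g s\<bar> \<le> C"
    and K: "continuous_on UNIV K" and L: "continuous_on UNIV L"
  shows "integrable (lborel \<Otimes>\<^sub>M lborel)
           (\<lambda>(t, s). if 0 \<le> t \<and> t \<le> b \<and> 0 \<le> s \<and> s \<le> t then K t * (L s * g s) else 0)"
    (is "integrable _ (\<lambda>(t, s). ?H t s)")
proof -
  have [measurable]: "K \<in> borel_measurable lborel" "L \<in> borel_measurable lborel"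
    by (simp_all add: borel_measurable_continuous_onI K L)
  have "bounded (K ` {0..b})" "bounded (L ` {0..b})"
    by (intro compact_imp_bounded compact_continuous_image continuous_on_subset[OF K]
          continuous_on_subset[OF L]; simp)+
  then obtain KB LB where M: "KB > 0" "\<forall>x\<in>{0..b}. \<bar>K x\<bar> \<le> KB" "LB > 0" "\<forall>x\<in>{0..b}. \<bar>L x\<bar> \<le> LB"
    by (auto simp: bounded_pos)
  have "C \<ge> 0" using gb[of 0] by linarith
  show ?thesis
  proof (rule integrableI_bounded_set[where A="{0..b} \<times> {0..b}" and B="KB * (LB * C)"])
    show "emeasure (lborel \<Otimes>\<^sub>M lborel) ({0..b} \<times> {0..b}) < \<infinity>"
      by (subst lborel.emeasure_pair_measure_Times)
         (auto simp: emeasure_lborel_Icc_eq ennreal_mult_less_top)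
    have "norm (?H t s) \<le> KB * (LB * C)" if "t \<in> {0..b}" "s \<in> {0..b}" for t s
    proof -
      have "\<bar>K t\<bar> * (\<bar>L s\<bar> * \<bar>g s\<bar>) \<le> KB * (LB * C)"
        using M that gb[of s] \<open>C \<ge> 0\<close> by (intro mult_mono) auto
      then show ?thesis using M \<open>C \<ge> 0\<close> by (simp add: abs_mult)
    qed
    then show "AE x in lborel \<Otimes>\<^sub>M lborel. x \<in> {0..b} \<times> {0..b} \<longrightarrow>
        norm (case x of (t, s) \<Rightarrow> ?H t s) \<le> KB * (LB * C)"
      by (intro AE_I2) auto
    show "AE x in lborel \<Otimes>\<^sub>M lborel. x \<notin> {0..b} \<times> {0..b} \<longrightarrow> (case x of (t, s) \<Rightarrow> ?H t s) = 0"
    proof (intro AE_I2 impI)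
      fix x :: "real \<times> real" assume "x \<notin> {0..b} \<times> {0..b}"
      then show "(case x of (t, s) \<Rightarrow> ?H t s) = 0" by (cases x) auto
    qed
  qed measurable
qed

lemma set_integral_triangle_swap_bounded:
  fixes g K L :: "real \<Rightarrow> real"
  assumes g: "g \<in> borel_measurable lborel" and gb: "\<And>s. \<bar>g s\<bar> \<le> C"
    and K: "continuous_on UNIV K" and L: "continuous_on UNIV L"
  shows "(LINT t:{0..b}|lborel. K t * (LINT s:{0..t}|lborel. L s * g s))
       = (LINT s:{0..b}|lborel. L s * g s * (LINT t:{s..b}|lborel. K t))"
proof -
  define H where "H t s = (if 0 \<le> t \<and> t \<le> b \<and> 0 \<le> s \<and> s \<le> t then K t * (L s * g s) else 0)" for t s
  have int: "integrable (lborel \<Otimes>\<^sub>M lborel) (\<lambda>(t, s). H t s)"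
    unfolding H_def by (rule integrable_triangle_indicator[OF g gb K L])
  have "(LINT t:{0..b}|lborel. K t * (LINT s:{0..t}|lborel. L s * g s)) = (\<integral>t. (\<integral>s. H t s \<partial>lborel) \<partial>lborel)"
    unfolding set_lebesgue_integral_def
  proof (intro Bochner_Integration.integral_cong refl)
    fix t
    have "indicator {0..b} t *\<^sub>R (K t * (\<integral>s. indicator {0..t} s *\<^sub>R (L s * g s) \<partial>lborel))
        = (\<integral>s. indicator {0..b} t * K t * (indicator {0..t} s * (L s * g s)) \<partial>lborel)"
      by simp
    also have "\<dots> = (\<integral>s. H t s \<partial>lborel)"
      by (rule Bochner_Integration.integral_cong) (auto simp: H_def split: split_indicator)
    finally show "indicator {0..b} t *\<^sub>R (K t * (\<integral>s. indicator {0..t} s *\<^sub>R (L s * g s) \<partial>lborel))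
        = (\<integral>s. H t s \<partial>lborel)" .
  qed
  also have "\<dots> = (\<integral>s. (\<integral>t. H t s \<partial>lborel) \<partial>lborel)"
    using lborel_pair.Fubini_integral[OF int] by simp
  also have "\<dots> = (LINT s:{0..b}|lborel. L s * g s * (LINT t:{s..b}|lborel. K t))"
    unfolding set_lebesgue_integral_def
  proof (intro Bochner_Integration.integral_cong refl)
    fix s
    have "(\<integral>t. H t s \<partial>lborel)
        = (\<integral>t. indicator {0..b} s * (L s * g s) * (indicator {s..b} t * K t) \<partial>lborel)"
      by (rule Bochner_Integration.integral_cong) (auto simp: H_def split: split_indicator)
    also have "\<dots> = indicator {0..b} s *\<^sub>R (L s * g s * (\<integral>t. indicator {s..b} t *\<^sub>R K t \<partial>lborel))"
      by simp
    finally show "(\<integral>t. H t s \<partial>lborel)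
        = indicator {0..b} s *\<^sub>R (L s * g s * (\<integral>t. indicator {s..b} t *\<^sub>R K t \<partial>lborel))" .
  qed
  finally show ?thesis .
qed

lemma set_integral_triangle_swap:
  fixes f K L :: "real \<Rightarrow> real"
  assumes f: "f \<in> Linf" and L: "continuous_on UNIV L" and K: "continuous_on UNIV K"
  shows "(LINT t:{0..b}|lborel. K t * (LINT s:{0..t}|lborel. L s * f s))
       = (LINT s:{0..b}|lborel. L s * f s * (LINT t:{s..b}|lborel. K t))"
proof -
  obtain C where C: "C \<ge> 0" "AE x in lborel. x \<ge> 0 \<longrightarrow> \<bar>f x\<bar> \<le> C" using LinfE[OF f] by blast
  have [measurable]: "f \<in> borel_measurable lborel" "L \<in> borel_measurable lborel"
    "K \<in> borel_measurable lborel"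
    using Linf_measurable[OF f] by (simp_all add: borel_measurable_continuous_onI L K)
  define g where "g s = (if \<bar>f s\<bar> \<le> C then f s else 0)" for s
  have g_meas[measurable]: "g \<in> borel_measurable lborel" unfolding g_def by measurable
  have g_bound: "\<bar>g s\<bar> \<le> C" for s using C(1) by (simp add: g_def)
  have ae: "AE s in lborel. s \<ge> 0 \<longrightarrow> f s = g s"
    using C(2) by eventually_elim (simp add: g_def)
  have "(LINT t:{0..b}|lborel. K t * (LINT s:{0..t}|lborel. L s * f s))
      = (LINT t:{0..b}|lborel. K t * (LINT s:{0..t}|lborel. L s * g s))"
  proof (intro set_lebesgue_integral_cong allI impI)
    fix t :: real assume "t \<in> {0..b}"
    have "(LINT s:{0..t}|lborel. L s * f s) = (LINT s:{0..t}|lborel. L s * g s)"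
      by (intro set_lebesgue_integral_cong_AE) (use ae in \<open>auto elim!: eventually_mono\<close>)
    then show "K t * (LINT s:{0..t}|lborel. L s * f s) = K t * (LINT s:{0..t}|lborel. L s * g s)"
      by simp
  qed simp
  also have "\<dots> = (LINT s:{0..b}|lborel. L s * g s * (LINT t:{s..b}|lborel. K t))"
    by (fact set_integral_triangle_swap_bounded[OF g_meas g_bound K L])
  also have "\<dots> = (LINT s:{0..b}|lborel. L s * f s * (LINT t:{s..b}|lborel. K t))"
  proof (rule set_lebesgue_integral_cong_AE)
    have [measurable]: "(\<lambda>s. LINT t:{s..b}|lborel. K t) \<in> borel_measurable lborel"
      by (rule borel_measurable_set_integral_Icc; measurable)
    show "(\<lambda>s. L s * g s * (LINT t:{s..b}|lborel. K t)) \<in> borel_measurable lborel"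
      by measurable
    show "(\<lambda>s. L s * f s * (LINT t:{s..b}|lborel. K t)) \<in> borel_measurable lborel"
      by measurable
    show "AE x\<in>{0..b} in lborel. L x * g x * (LINT t:{x..b}|lborel. K t)
        = L x * f x * (LINT t:{x..b}|lborel. K t)"
      using ae by eventually_elim auto
  qed simp
  finally show ?thesis .
qed

definition primitive :: "(real \<Rightarrow> real) \<Rightarrow> real \<Rightarrow> real" where
  "primitive f x = (LINT s:{0..x}|lborel. f s)"

lemma primitive_nonpos: "x \<le> 0 \<Longrightarrow> primitive f x = 0"
proof (cases "x = 0")
  case True
  then show ?thesis using interval_integral_Icc[of 0 0 f] by (simp add: primitive_def)
qed (auto simp: primitive_def set_lebesgue_integral_def)

lemma primitive_diff:
  assumes "f \<in> Linf" "0 \<le> x" "x \<le> y"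
  shows "primitive f y - primitive f x = (LINT s:{x..y}|lborel. f s)"
  unfolding primitive_def
  using set_integral_Icc_split[OF set_integrable_Linf[OF assms(1) order.refl, of y] assms(2,3)] by simp

lemma primitive_lipschitz:
  assumes f: "f \<in> Linf" and C: "AE x in lborel. x \<ge> 0 \<longrightarrow> \<bar>f x\<bar> \<le> C" "C \<ge> 0"
  shows "\<bar>primitive f y - primitive f x\<bar> \<le> C * \<bar>y - x\<bar>"
proof -
  have nonneg: "\<bar>primitive f y - primitive f x\<bar> \<le> C * (y - x)" if "0 \<le> x" "x \<le> y" for x y
  proof -
    have "(LINT s:{x..y}|lborel. (1::real)) = y - x"
      by (rule set_integral_Icc_FTC) (use that in \<open>auto intro!: derivative_eq_intros\<close>)
    then show ?thesis
      using set_integral_weighted_abs_le[OF f C(1) _ _ that(1), of "\<lambda>_. 1" y] primitive_diff[OF f that]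
      by simp
  qed
  have ordered: "\<bar>primitive f y - primitive f x\<bar> \<le> C * (y - x)" if "x \<le> y" for x y
  proof (cases "0 \<le> x")
    case False
    then have "\<bar>primitive f y - primitive f x\<bar> = \<bar>primitive f (max y 0) - primitive f 0\<bar>"
      by (cases "y \<le> 0") (simp_all add: primitive_nonpos max_def)
    also have "\<dots> \<le> C * (max y 0 - 0)" by (rule nonneg) auto
    also have "\<dots> \<le> C * (y - x)" using False that C(2) by (intro mult_left_mono) auto
    finally show ?thesis .
  qed (use nonneg that in auto)
  show ?thesis
    using ordered[of x y] ordered[of y x] by (cases "x \<le> y") (auto simp: abs_minus_commute)
qed

lemma continuous_on_primitive:
  assumes f: "f \<in> Linf"
  shows "continuous_on UNIV (primitive f)"
proof -
  obtain C where C: "C \<ge> 0" "AE x in lborel. x \<ge> 0 \<longrightarrow> \<bar>f x\<bar> \<le> C" using LinfE[OF f] by blast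
  have "C-lipschitz_on UNIV (primitive f)"
    by (rule lipschitz_onI) (use primitive_lipschitz[OF f C(2,1)] C(1) in \<open>auto simp: dist_real_def\<close>)
  then show ?thesis by (rule lipschitz_on_continuous_on)
qed

lemma S_op_abs_le:
  assumes f: "f \<in> Linf" and C: "AE x in lborel. x \<ge> 0 \<longrightarrow> \<bar>f x\<bar> \<le> C" "C \<ge> 0" and x: "x \<ge> 0"
  shows "\<bar>S_op f x\<bar> \<le> C"
proof -
  have "\<bar>LINT t:{0..x}|lborel. exp t * f t\<bar> \<le> C * (LINT t:{0..x}|lborel. exp t)"
    by (rule set_integral_weighted_abs_le[OF f C(1)]) (auto intro!: continuous_intros)
  also have "\<dots> = C * (exp x - 1)" using LINT_exp[of 0 x] x by simp
  finally have "\<bar>S_op f x\<bar> \<le> exp (- x) * (C * (exp x - 1))"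
    unfolding S_op_def by (simp add: abs_mult mult.commute)
  also have "\<dots> = C * (1 - exp (- x))" by (simp add: exp_minus field_simps)
  also have "\<dots> \<le> C" using C(2) by (simp add: mult_left_le)
  finally show ?thesis .
qed

lemma S_op_Linf:
  assumes f: "f \<in> Linf"
  shows "S_op f \<in> Linf"
proof -
  obtain C where C: "C \<ge> 0" "AE x in lborel. x \<ge> 0 \<longrightarrow> \<bar>f x\<bar> \<le> C" using LinfE[OF f] by blast
  have [measurable]: "f \<in> borel_measurable lborel" using Linf_measurable[OF f] .
  have [measurable]: "(\<lambda>x. LINT t:{0..x}|lborel. f t * exp t) \<in> borel_measurable lborel"
    by (rule borel_measurable_set_integral_Icc; measurable)
  have "S_op f \<in> borel_measurable lborel" unfolding S_op_def by measurable
  then show ?thesis using S_op_abs_le[OF f C(2,1)] by (intro LinfI)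
qed

lemma S_op_diff:
  assumes "set_integrable lborel {0..x} (\<lambda>t. f t * exp t)" "set_integrable lborel {0..x} (\<lambda>t. g t * exp t)"
  shows "S_op (\<lambda>t. f t - g t) x = S_op f x - S_op g x"
  using set_integral_diff(2)[OF assms] by (simp add: S_op_def left_diff_distrib right_diff_distrib)

lemma S_op_add:
  assumes "set_integrable lborel {0..x} (\<lambda>t. f t * exp t)" "set_integrable lborel {0..x} (\<lambda>t. g t * exp t)"
  shows "S_op (\<lambda>t. f t + g t) x = S_op f x + S_op g x"
  using set_integral_add(2)[OF assms] by (simp add: S_op_def distrib_left distrib_right)

lemma S_op_deriv_add:
  assumes x: "x \<ge> 0"
    and W: "\<And>t. t \<in> {0..x} \<Longrightarrow> (W has_real_derivative W' t) (at t within {0..x})"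
    and W': "continuous_on {0..x} W'"
  shows "S_op (\<lambda>t. W' t + W t) x = W x - exp (- x) * W 0"
proof -
  have "continuous_on {0..x} W"
    unfolding continuous_on_eq_continuous_within using W DERIV_continuous by blast
  then have "(LINT t:{0..x}|lborel. (W' t + W t) * exp t) = W x * exp x - W 0 * exp 0"
    by (intro set_integral_Icc_FTC x continuous_intros W')
       (auto intro!: derivative_eq_intros W simp: algebra_simps)
  then show ?thesis unfolding S_op_def by (simp add: exp_minus field_simps)
qed

lemma S_op_one: "x \<ge> 0 \<Longrightarrow> S_op (\<lambda>_. 1) x = 1 - exp (- x)"
  using S_op_deriv_add[of x "\<lambda>_. 1" "\<lambda>_. 0"] by simp

lemma S_op_primitive:
  assumes f: "f \<in> Linf" and x: "0 \<le> x"
  shows "S_op (primitive f) x = primitive f x - S_op f x"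
proof -
  have "(LINT t:{0..x}|lborel. primitive f t * exp t)
      = (LINT t:{0..x}|lborel. exp t * (LINT s:{0..t}|lborel. 1 * f s))"
    by (simp add: primitive_def mult.commute)
  also have "\<dots> = (LINT s:{0..x}|lborel. 1 * f s * (LINT t:{s..x}|lborel. exp t))"
    by (rule set_integral_triangle_swap[OF f]) (auto intro!: continuous_intros)
  also have "\<dots> = (LINT s:{0..x}|lborel. exp x * f s - f s * exp s)"
    by (rule set_lebesgue_integral_cong) (auto simp: LINT_exp algebra_simps)
  also have "\<dots> = exp x * primitive f x - (LINT t:{0..x}|lborel. f t * exp t)"
    using set_integral_diff(2)[OF set_integrable_mult_right[OF set_integrable_Linf[OF f order.refl, of x]]
        set_integrable_continuous_mult_Linf[OF f _ order.refl, of exp x], of "exp x"]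
    by (simp add: primitive_def mult.commute continuous_on_exp)
  finally show ?thesis unfolding S_op_def by (simp add: exp_minus field_simps)
qed

lemma primitive_S_op:
  assumes f: "f \<in> Linf" and b: "0 \<le> b"
  shows "primitive (S_op f) b = primitive f b - S_op f b"
proof -
  have exp_f: "set_integrable lborel {0..b} (\<lambda>s. exp s * f s)"
    by (rule set_integrable_continuous_mult_Linf[OF f _ order.refl]) (auto intro!: continuous_intros)
  have "primitive (S_op f) b = (LINT t:{0..b}|lborel. exp (- t) * (LINT s:{0..t}|lborel. exp s * f s))"
    unfolding primitive_def S_op_def by (simp add: mult.commute)
  also have "\<dots> = (LINT s:{0..b}|lborel. exp s * f s * (LINT t:{s..b}|lborel. exp (- t)))"
    by (rule set_integral_triangle_swap[OF f]) (auto intro!: continuous_intros)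
  also have "\<dots> = (LINT s:{0..b}|lborel. f s - exp (- b) * (exp s * f s))"
    by (rule set_lebesgue_integral_cong) (auto simp: LINT_exp_minus algebra_simps exp_minus_inverse)
  also have "\<dots> = primitive f b - S_op f b"
    using set_integral_diff(2)[OF set_integrable_Linf[OF f order.refl] set_integrable_mult_right[OF exp_f]]
    by (simp add: primitive_def S_op_def mult.commute)
  finally show ?thesis .
qed

lemma set_integral_Icc_diff_S_op:
  assumes f: "f \<in> Linf" and x: "0 \<le> x" and \<theta>: "0 \<le> \<theta>"
  shows "(LINT t:{x..x+\<theta>}|lborel. f t - S_op f t) = S_op f (x + \<theta>) - S_op f x"
proof -
  have "\<And>y. 0 \<le> y \<Longrightarrow> primitive (\<lambda>t. f t - S_op f t) y = S_op f y"
    using primitive_S_op[OF f] set_integral_diff(2)[OF set_integrable_Linf[OF f order.refl]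
        set_integrable_Linf[OF S_op_Linf[OF f] order.refl]]
    by (simp add: primitive_def)
  then show ?thesis
    using primitive_diff[OF Linf_diff[OF f S_op_Linf[OF f]] x, of "x + \<theta>"] x \<theta> by simp
qed

section \<open>Limsups and Fekete's lemma\<close>

definition limsup_real :: "(real \<Rightarrow> real) \<Rightarrow> real" where
  "limsup_real v = real_of_ereal (Limsup at_top (\<lambda>x. ereal (v x)))"

lemma Limsup_eq_limsup_real:
  fixes v :: "real \<Rightarrow> real"
  assumes B: "eventually (\<lambda>x. \<bar>v x\<bar> \<le> B) at_top"
  shows "Limsup at_top (\<lambda>x. ereal (v x)) = ereal (limsup_real v)" and "\<bar>limsup_real v\<bar> \<le> B"
proof -
  have upper: "Limsup at_top (\<lambda>x. ereal (v x)) \<le> ereal B"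
    by (rule Limsup_bounded) (use B in \<open>auto elim!: eventually_mono\<close>)
  have "ereal (- B) \<le> Liminf at_top (\<lambda>x. ereal (v x))"
    by (rule Liminf_bounded) (use B in \<open>auto elim!: eventually_mono\<close>)
  also have "\<dots> \<le> Limsup at_top (\<lambda>x. ereal (v x))" by (rule Liminf_le_Limsup) simp
  finally have lower: "ereal (- B) \<le> Limsup at_top (\<lambda>x. ereal (v x))" .
  show "Limsup at_top (\<lambda>x. ereal (v x)) = ereal (limsup_real v)"
    using upper lower unfolding limsup_real_def by (cases "Limsup at_top (\<lambda>x. ereal (v x))") auto
  with upper lower show "\<bar>limsup_real v\<bar> \<le> B" by auto
qed

lemma eventually_less_limsup_real:
  fixes v :: "real \<Rightarrow> real"
  assumes B: "eventually (\<lambda>x. \<bar>v x\<bar> \<le> B) at_top" and c: "limsup_real v < c"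
  shows "eventually (\<lambda>x. v x < c) at_top"
  using Limsup_lessD[of at_top "\<lambda>x. ereal (v x)" "ereal c"] Limsup_eq_limsup_real(1)[OF B] c by simp

lemma limsup_real_le:
  fixes v :: "real \<Rightarrow> real"
  assumes B: "eventually (\<lambda>x. \<bar>v x\<bar> \<le> B) at_top"
    and d: "\<And>c. c > d \<Longrightarrow> eventually (\<lambda>x. v x < c) at_top"
  shows "limsup_real v \<le> d"
proof -
  have "Limsup at_top (\<lambda>x. ereal (v x)) \<le> ereal d"
    unfolding Limsup_le_iff
  proof (intro allI impI)
    fix y :: ereal assume y: "y > ereal d"
    show "eventually (\<lambda>x. y > ereal (v x)) at_top"
      using d[of "real_of_ereal y"] y by (cases y) auto
  qed
  then show ?thesis using Limsup_eq_limsup_real(1)[OF B] by simp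
qed

lemma subadditive_ratio_le:
  fixes G :: "real \<Rightarrow> real"
  assumes sub: "\<And>s t. s > 0 \<Longrightarrow> t > 0 \<Longrightarrow> G (s + t) \<le> G s + G t"
    and bnd: "\<And>t. t > 0 \<Longrightarrow> \<bar>G t\<bar> \<le> C * t"
    and a: "a > 0" and t: "t > 0"
  shows "G t / t \<le> G a / a + 2 * C * a / t"
proof -
  have C: "C \<ge> 0" using bnd[of 1] by simp
  have iter: "G (real n * a + r) \<le> real n * G a + G r" if "r > 0" for n :: nat and r
  proof (induction n)
    case (Suc n)
    have "G (real (Suc n) * a + r) = G (a + (real n * a + r))" by (simp add: algebra_simps)
    also have "\<dots> \<le> G a + G (real n * a + r)" using a that by (intro sub add_nonneg_pos) auto
    finally show ?case using Suc by (simp add: algebra_simps)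
  qed simp
  \<comment> \<open>Write \<open>t = n a + r\<close> with \<open>0 < r \<le> a\<close>.\<close>
  define n where "n = nat (\<lceil>t / a\<rceil> - 1)"
  define r where "r = t - real n * a"
  have "t / a > 0" using a t by simp
  then have n: "real n < t / a" "t / a \<le> real n + 1"
    unfolding n_def by (auto simp: of_nat_nat) linarith+
  have r: "r > 0" "r \<le> a" using n a unfolding r_def by (auto simp: field_simps)
  have "G t \<le> real n * G a + G r" using iter[OF r(1), of n] by (simp add: r_def)
  also have "\<dots> = t * (G a / a) - r * (G a / a) + G r" using a by (simp add: r_def field_simps)
  also have "\<dots> \<le> t * (G a / a) + C * r + C * r"
  proof -
    have "- C \<le> G a / a" using bnd[OF a] a by (simp add: field_simps abs_le_iff)
    then have "- (r * (G a / a)) \<le> C * r" using r(1) mult_left_mono[of "- C" "G a / a" r] by (simp add: mult.commute)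
    then show ?thesis using bnd[OF r(1)] by linarith
  qed
  also have "\<dots> \<le> t * (G a / a) + 2 * C * a" using r C by (simp add: mult_left_mono)
  finally show ?thesis using t by (simp add: field_simps)
qed

lemma subadditive_ratio_tendsto:
  fixes G :: "real \<Rightarrow> real"
  assumes sub: "\<And>s t. s > 0 \<Longrightarrow> t > 0 \<Longrightarrow> G (s + t) \<le> G s + G t"
    and bnd: "\<And>t. t > 0 \<Longrightarrow> \<bar>G t\<bar> \<le> C * t"
  shows "((\<lambda>t. G t / t) \<longlongrightarrow> Inf ((\<lambda>t. G t / t) ` {0<..})) at_top"
proof (rule tendstoI)
  define m where "m = Inf ((\<lambda>t. G t / t) ` {0<..})"
  have "- C \<le> G t / t" if "t > 0" for t using bnd[OF that] that by (simp add: field_simps abs_le_iff)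
  then have bdd: "bdd_below ((\<lambda>t. G t / t) ` {0<..})" by (intro bdd_belowI[of _ "- C"]) auto
  fix e :: real assume e: "e > 0"
  obtain a where a: "a > 0" "G a / a < m + e / 2"
    using cInf_lessD[of "(\<lambda>t. G t / t) ` {0<..}" "m + e / 2"] e unfolding m_def by auto
  have "eventually (\<lambda>t. t > max 1 (4 * C * a / e)) at_top" by (rule eventually_gt_at_top)
  then show "eventually (\<lambda>t. dist (G t / t) m < e) at_top"
  proof (rule eventually_mono)
    fix t assume t: "t > max 1 (4 * C * a / e)"
    then have "2 * C * a / t < e / 2" using e by (simp add: field_simps)
    moreover have "t > 0" using t by simp
    ultimately have "G t / t < m + e" using subadditive_ratio_le[OF sub bnd a(1), of t] a(2) by linarith
    moreover have "m \<le> G t / t" unfolding m_def by (rule cInf_lower) (use bdd t in auto)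
    ultimately show "dist (G t / t) m < e" by (simp add: dist_real_def)
  qed
qed

section \<open>Upper window means\<close>

definition window_avg :: "(real \<Rightarrow> real) \<Rightarrow> real \<Rightarrow> real \<Rightarrow> real" where
  "window_avg f \<theta> x = (1 / \<theta>) * (LINT t:{x..x+\<theta>}|lborel. f t)"

definition upper_window_mean :: "(real \<Rightarrow> real) \<Rightarrow> real \<Rightarrow> real" where
  "upper_window_mean f \<theta> = limsup_real (window_avg f \<theta>)"

lemma M1_upper_eq_Lim: "M1_upper f = Lim at_top (upper_window_mean f)"
  unfolding M1_upper_def upper_window_mean_def limsup_real_def window_avg_def ..

lemma window_avg_primitive:
  assumes "f \<in> Linf" "0 \<le> x" "0 \<le> \<theta>"
  shows "window_avg f \<theta> x = (primitive f (x + \<theta>) - primitive f x) / \<theta>"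
  unfolding window_avg_def using primitive_diff[OF assms(1,2), of "x + \<theta>"] assms(3) by simp

lemma window_avg_abs_le:
  assumes f: "f \<in> Linf" and C: "AE x in lborel. x \<ge> 0 \<longrightarrow> \<bar>f x\<bar> \<le> C" "C \<ge> 0"
    and x: "0 \<le> x" and \<theta>: "0 < \<theta>"
  shows "\<bar>window_avg f \<theta> x\<bar> \<le> C"
  using primitive_lipschitz[OF f C, of "x + \<theta>" x] window_avg_primitive[OF f x] \<theta>
  by (simp add: field_simps abs_divide)

lemma eventually_window_avg_abs_le:
  assumes "f \<in> Linf" "AE x in lborel. x \<ge> 0 \<longrightarrow> \<bar>f x\<bar> \<le> C" "C \<ge> 0" "0 < \<theta>"
  shows "eventually (\<lambda>x. \<bar>window_avg f \<theta> x\<bar> \<le> C) at_top"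
  using eventually_ge_at_top[of 0] by eventually_elim (rule window_avg_abs_le[OF assms(1-3) _ assms(4)])

lemma window_avg_Linf:
  assumes f: "f \<in> Linf" and \<theta>: "0 < \<theta>"
  shows "window_avg f \<theta> \<in> Linf"
proof -
  obtain C where C: "C \<ge> 0" "AE x in lborel. x \<ge> 0 \<longrightarrow> \<bar>f x\<bar> \<le> C" using LinfE[OF f] by blast
  have [measurable]: "f \<in> borel_measurable lborel" using Linf_measurable[OF f] .
  have [measurable]: "(\<lambda>x. LINT t:{x..x+\<theta>}|lborel. f t) \<in> borel_measurable lborel"
    by (rule borel_measurable_set_integral_Icc; measurable)
  have "window_avg f \<theta> \<in> borel_measurable lborel" unfolding window_avg_def by measurable
  then show ?thesis using window_avg_abs_le[OF f C(2,1) _ \<theta>] by (intro LinfI)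
qed

lemma window_avg_add:
  assumes f: "f \<in> Linf" and x: "0 \<le> x" and a: "0 < a" and b: "0 < b"
  shows "(a + b) * window_avg f (a + b) x = a * window_avg f a x + b * window_avg f b (x + a)"
  using window_avg_primitive[OF f x, of "a + b"] window_avg_primitive[OF f x, of a]
    window_avg_primitive[OF f, of "x + a" b] a b x
  by (simp add: field_simps)

lemma upper_window_mean_subadditive:
  assumes f: "f \<in> Linf" and a: "0 < a" and b: "0 < b"
  shows "(a + b) * upper_window_mean f (a + b) \<le> a * upper_window_mean f a + b * upper_window_mean f b"
proof -
  obtain C where C: "C \<ge> 0" "AE x in lborel. x \<ge> 0 \<longrightarrow> \<bar>f x\<bar> \<le> C" using LinfE[OF f] by blast
  note bounded = eventually_window_avg_abs_le[OF f C(2,1)]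
  define d where "d = (a * upper_window_mean f a + b * upper_window_mean f b) / (a + b)"
  have "upper_window_mean f (a + b) \<le> d" unfolding upper_window_mean_def
  proof (rule limsup_real_le[OF bounded])
    show "0 < a + b" using a b by simp
    fix c assume "c > d"
    define e where "e = c - d"
    have e: "e > 0" using \<open>c > d\<close> by (simp add: e_def)
    have ev_a: "eventually (\<lambda>x. window_avg f a x < upper_window_mean f a + e) at_top"
      unfolding upper_window_mean_def by (rule eventually_less_limsup_real[OF bounded[OF a]]) (use e in simp)
    have "eventually (\<lambda>x. window_avg f b x < upper_window_mean f b + e) at_top"
      unfolding upper_window_mean_def by (rule eventually_less_limsup_real[OF bounded[OF b]]) (use e in simp)
    then obtain N where "\<And>x. x \<ge> N \<Longrightarrow> window_avg f b x < upper_window_mean f b + e"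
      by (auto simp: eventually_at_top_linorder)
    then have ev_b: "eventually (\<lambda>x. window_avg f b (x + a) < upper_window_mean f b + e) at_top"
      using a unfolding eventually_at_top_linorder by (intro exI[of _ N]) auto
    show "eventually (\<lambda>x. window_avg f (a + b) x < c) at_top"
      using ev_a ev_b eventually_ge_at_top[of 0]
    proof eventually_elim
      case (elim x)
      have "(a + b) * window_avg f (a + b) x = a * window_avg f a x + b * window_avg f b (x + a)"
        by (rule window_avg_add[OF f elim(3) a b])
      also have "\<dots> < a * (upper_window_mean f a + e) + b * (upper_window_mean f b + e)"
        using elim(1,2) a b by (intro add_strict_mono mult_strict_left_mono) auto
      also have "\<dots> = (a + b) * c"
      proof -
        have "a * upper_window_mean f a + b * upper_window_mean f b = (a + b) * d"
          using a b by (simp add: d_def)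
        then show ?thesis unfolding e_def by (simp add: algebra_simps)
      qed
      finally show ?case using a b by (simp add: mult_less_cancel_left_pos)
    qed
  qed
  then show ?thesis using a b unfolding d_def by (simp add: field_simps)
qed

lemma upper_window_mean_tendsto:
  assumes f: "f \<in> Linf"
  shows "(upper_window_mean f \<longlongrightarrow> M1_upper f) at_top"
proof -
  obtain C where C: "C \<ge> 0" "AE x in lborel. x \<ge> 0 \<longrightarrow> \<bar>f x\<bar> \<le> C" using LinfE[OF f] by blast
  define G where "G t = t * upper_window_mean f t" for t
  have abs_le: "\<bar>upper_window_mean f t\<bar> \<le> C" if "t > 0" for t
    unfolding upper_window_mean_def
    by (rule Limsup_eq_limsup_real(2)[OF eventually_window_avg_abs_le[OF f C(2,1) that]])
  have "((\<lambda>t. G t / t) \<longlongrightarrow> Inf ((\<lambda>t. G t / t) ` {0<..})) at_top"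
  proof (rule subadditive_ratio_tendsto)
    show "G (s + t) \<le> G s + G t" if "s > 0" "t > 0" for s t
      using upper_window_mean_subadditive[OF f that] unfolding G_def .
    show "\<bar>G t\<bar> \<le> C * t" if "t > 0" for t
      using abs_le[OF that] that unfolding G_def by (simp add: abs_mult mult.commute)
  qed
  moreover have "eventually (\<lambda>t. G t / t = upper_window_mean f t) at_top"
    using eventually_gt_at_top[of 0] by eventually_elim (simp add: G_def)
  ultimately have "(upper_window_mean f \<longlongrightarrow> Inf ((\<lambda>t. G t / t) ` {0<..})) at_top"
    by (rule Lim_transform_eventually)
  moreover from this have "M1_upper f = Inf ((\<lambda>t. G t / t) ` {0<..})"
    unfolding M1_upper_eq_Lim by (rule tendsto_Lim[rotated]) simp
  ultimately show ?thesis by simp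
qed

lemma M1_upper_eq_0:
  assumes D: "\<And>\<theta> x. \<theta> > 0 \<Longrightarrow> x \<ge> 0 \<Longrightarrow> \<bar>window_avg v \<theta> x\<bar> \<le> D / \<theta>"
  shows "M1_upper v = 0"
proof -
  have bound: "\<bar>upper_window_mean v \<theta>\<bar> \<le> D / \<theta>" if "\<theta> > 0" for \<theta>
    unfolding upper_window_mean_def
    by (rule Limsup_eq_limsup_real(2)) (use eventually_ge_at_top[of 0] D[OF that] in \<open>blast intro: eventually_mono\<close>)
  have lim: "((\<lambda>\<theta>. D / \<theta>) \<longlongrightarrow> 0) at_top"
    by (rule tendsto_divide_0[OF tendsto_const]) (rule filterlim_at_top_imp_at_infinity[OF filterlim_ident])
  have "(upper_window_mean v \<longlongrightarrow> 0) at_top"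
  proof (rule tendsto_sandwich[OF _ _ tendsto_minus[OF lim, simplified] lim])
    show "eventually (\<lambda>\<theta>. - (D / \<theta>) \<le> upper_window_mean v \<theta>) at_top"
      using eventually_gt_at_top[of 0] by eventually_elim (use bound in \<open>fastforce simp: abs_le_iff\<close>)
    show "eventually (\<lambda>\<theta>. upper_window_mean v \<theta> \<le> D / \<theta>) at_top"
      using eventually_gt_at_top[of 0] by eventually_elim (use bound in \<open>fastforce simp: abs_le_iff\<close>)
  qed
  then show ?thesis unfolding M1_upper_eq_Lim by (rule tendsto_Lim[rotated]) simp
qed

section \<open>Averages in the range of I - S\<close>

lemma primitive_eq_integral:
  assumes "continuous_on UNIV F"
  shows "primitive F u = integral {0..u} F"
proof (cases "u < 0")
  case False
  then show ?thesis unfolding primitive_def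
    by (intro set_borel_integral_eq_integral(2) borel_integrable_atLeastAtMost' continuous_on_subset[OF assms])
       auto
qed (simp add: primitive_def set_lebesgue_integral_def)

lemma primitive_has_real_derivative_at:
  assumes F: "continuous_on UNIV F" and t: "t > 0"
  shows "(primitive F has_real_derivative F t) (at t)"
proof -
  have "((\<lambda>u. integral {0..u} F) has_real_derivative F t) (at t within {0..t+1})"
    by (rule integral_has_real_derivative) (use t in \<open>auto intro: continuous_on_subset[OF F]\<close>)
  then have "((\<lambda>u. integral {0..u} F) has_real_derivative F t) (at t within {0<..<t+1})"
    by (rule DERIV_subset) auto
  then show ?thesis
    using at_within_open[of t "{0<..<t+1}"] t by (simp add: primitive_eq_integral[OF F, abs_def])
qed

lemma primitive_has_real_derivative_within:
  assumes F: "continuous_on UNIV F" and t: "t \<in> {0..b}"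
  shows "(primitive F has_real_derivative F t) (at t within {0..b})"
  using integral_has_real_derivative[OF continuous_on_subset[OF F] t]
  by (simp add: primitive_eq_integral[OF F, abs_def])

lemma primitive_window_has_real_derivative:
  assumes F: "continuous_on UNIV F" and \<theta>: "\<theta> > 0" and t: "t \<in> {0..x}"
  shows "((\<lambda>x. (primitive F (x + \<theta>) - primitive F x - primitive F \<theta>) / \<theta>)
           has_real_derivative (F (t + \<theta>) - F t) / \<theta>) (at t within {0..x})"
proof -
  have "((\<lambda>x. primitive F (x + \<theta>)) has_real_derivative F (t + \<theta>)) (at t)"
    using primitive_has_real_derivative_at[OF F, of "t + \<theta>"] t \<theta> by (simp add: DERIV_shift)
  then have "((\<lambda>x. primitive F (x + \<theta>)) has_real_derivative F (t + \<theta>)) (at t within {0..x})"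
    by (rule has_field_derivative_at_within)
  then have "((\<lambda>x. (primitive F (x + \<theta>) - primitive F x - primitive F \<theta>) / \<theta>)
      has_real_derivative (F (t + \<theta>) - F t - 0) / \<theta>) (at t within {0..x})"
    by (intro DERIV_cdivide DERIV_diff primitive_has_real_derivative_within[OF F t] DERIV_const)
  then show ?thesis by simp
qed

lemma lipschitz_primitive_window_deviation:
  fixes F :: "real \<Rightarrow> real"
  assumes lip: "\<And>x y. \<bar>F y - F x\<bar> \<le> C * \<bar>y - x\<bar>" and F0: "F 0 = 0" and C: "C \<ge> 0"
    and x: "0 \<le> x" and \<theta>: "0 < \<theta>"
  shows "\<bar>F x - (primitive F (x + \<theta>) - primitive F x - primitive F \<theta>) / \<theta>\<bar> \<le> 2 * C * \<theta>"
proof -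
  have "C-lipschitz_on UNIV F"
    by (rule lipschitz_onI) (use lip C in \<open>auto simp: dist_real_def\<close>)
  then have Fc: "continuous_on UNIV F" by (rule lipschitz_on_continuous_on)
  have "primitive F (x + \<theta>) - primitive F x = integral {x..x+\<theta>} F"
    using Henstock_Kurzweil_Integration.integral_combine[OF x _ integrable_continuous_interval[OF
        continuous_on_subset[OF Fc]], of "x + \<theta>"] \<theta>
    by (simp add: primitive_eq_integral[OF Fc])
  also have "\<dots> = integral {x..x+\<theta>} (\<lambda>t. F t - F x) + \<theta> * F x"
    using integral_diff[OF integrable_continuous_interval[OF continuous_on_subset[OF Fc]]
        integrable_const_ivl[of "F x" x "x + \<theta>"]] \<theta> by simp
  finally have "\<theta> * (F x - (primitive F (x + \<theta>) - primitive F x - primitive F \<theta>) / \<theta>)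
      = - integral {x..x+\<theta>} (\<lambda>t. F t - F x) + integral {0..\<theta>} F" (is "\<theta> * ?d = _")
    using \<theta> by (simp add: primitive_eq_integral[OF Fc] field_simps)
  moreover have "norm (integral {x..x+\<theta>} (\<lambda>t. F t - F x)) \<le> (C * \<theta>) * ((x + \<theta>) - x)"
  proof (rule integral_bound)
    fix t assume "t \<in> {x..x+\<theta>}"
    then have "C * \<bar>t - x\<bar> \<le> C * \<theta>" using C by (intro mult_left_mono) auto
    then show "norm (F t - F x) \<le> C * \<theta>" unfolding real_norm_def using lip[of t x] by linarith
  qed (use \<theta> in \<open>auto intro!: continuous_intros continuous_on_subset[OF Fc]\<close>)
  moreover have "norm (integral {0..\<theta>} F) \<le> (C * \<theta>) * (\<theta> - 0)"
  proof (rule integral_bound)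
    fix t assume "t \<in> {0..\<theta>}"
    then have "C * \<bar>t - 0\<bar> \<le> C * \<theta>" using C by (intro mult_left_mono) auto
    then show "norm (F t) \<le> C * \<theta>" unfolding real_norm_def using lip[of t 0] F0 by simp
  qed (use \<theta> in \<open>auto intro: continuous_on_subset[OF Fc]\<close>)
  ultimately have "\<bar>\<theta> * ?d\<bar> \<le> \<theta> * (2 * C * \<theta>)"
    unfolding real_norm_def by (simp add: abs_le_iff algebra_simps)
  then have "\<theta> * \<bar>?d\<bar> \<le> \<theta> * (2 * C * \<theta>)" using \<theta> by (simp add: abs_mult)
  then show ?thesis by (rule mult_left_le_imp_le) (use \<theta> in simp)
qed

lemma S_op_primitive_diff_deriv_add:
  assumes f: "f \<in> Linf" and x: "x \<ge> 0"
    and W: "\<And>t. t \<in> {0..x} \<Longrightarrow> (W has_real_derivative W' t) (at t within {0..x})"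
    and W': "continuous_on {0..x} W'" and W0: "W 0 = 0"
  shows "S_op (\<lambda>t. f t + primitive f t - (W' t + W t)) x = primitive f x - W x"
proof -
  have Wc: "continuous_on {0..x} W"
    unfolding continuous_on_eq_continuous_within using W DERIV_continuous by blast
  have int: "set_integrable lborel {0..x} (\<lambda>t. g t * exp t)" if "continuous_on {0..x} g" for g
    by (rule borel_integrable_atLeastAtMost') (intro continuous_intros that)
  have int_f: "set_integrable lborel {0..x} (\<lambda>t. f t * exp t)"
    using set_integrable_continuous_mult_Linf[OF f _ order.refl, of exp x]
    by (simp add: mult.commute continuous_on_exp)
  have int_F: "set_integrable lborel {0..x} (\<lambda>t. primitive f t * exp t)"
    by (rule int) (rule continuous_on_subset[OF continuous_on_primitive[OF f]], simp)
  have int_W: "set_integrable lborel {0..x} (\<lambda>t. (W' t + W t) * exp t)"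
    by (rule int) (intro continuous_intros W' Wc)
  have "S_op (\<lambda>t. f t + primitive f t - (W' t + W t)) x
      = S_op f x + S_op (primitive f) x - S_op (\<lambda>t. W' t + W t) x"
    using int_f int_F int_W by (simp add: S_op_diff S_op_add distrib_right left_diff_distrib)
  also have "\<dots> = primitive f x - W x"
    using S_op_primitive[OF f x] S_op_deriv_add[OF x W W'] W0 by simp
  finally show ?thesis .
qed

text \<open>With \<open>F\<close> the primitive of \<open>f\<close> and \<open>W\<close> the primitive of \<open>window_avg f \<theta>\<close> normalised
  by \<open>W 0 = 0\<close>, the function \<open>u = F - W\<close> is bounded, and \<open>h = u' + u\<close> satisfies
  \<open>h - S h = u' = f - window_avg f \<theta>\<close>.\<close>

lemma window_avg_in_range_diff_S_op:
  assumes f: "f \<in> Linf" and \<theta>: "\<theta> > 0"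
  obtains h where "h \<in> Linf" "\<And>x. x \<ge> 0 \<Longrightarrow> h x - S_op h x = f x - window_avg f \<theta> x"
proof -
  obtain C where C: "C \<ge> 0" "AE x in lborel. x \<ge> 0 \<longrightarrow> \<bar>f x\<bar> \<le> C" using LinfE[OF f] by blast
  define F where "F = primitive f"
  define A where "A t = (F (t + \<theta>) - F t) / \<theta>" for t
  define W where "W x = (primitive F (x + \<theta>) - primitive F x - primitive F \<theta>) / \<theta>" for x
  define h where "h x = f x + F x - (A x + W x)" for x
  have Fc: "continuous_on UNIV F" unfolding F_def by (rule continuous_on_primitive[OF f])
  have lip: "\<bar>F y - F x\<bar> \<le> C * \<bar>y - x\<bar>" for x y
    unfolding F_def by (rule primitive_lipschitz[OF f C(2,1)])
  have F0: "F 0 = 0" unfolding F_def by (simp add: primitive_nonpos)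
  have Ac: "continuous_on UNIV A"
    unfolding A_def by (intro continuous_intros continuous_on_compose2[OF Fc]) (use \<theta> in auto)
  have A_bound: "\<bar>A x\<bar> \<le> C" for x
    using lip[of x "x + \<theta>"] \<theta> by (simp add: A_def abs_divide field_simps)
  have W_bound: "\<bar>F x - W x\<bar> \<le> 2 * C * \<theta>" if "x \<ge> 0" for x
    unfolding W_def by (rule lipschitz_primitive_window_deviation[OF lip F0 C(1) that \<theta>])
  have S_h: "S_op h x = F x - W x" if x: "x \<ge> 0" for x
    unfolding h_def F_def
  proof (rule S_op_primitive_diff_deriv_add[OF f x _ continuous_on_subset[OF Ac]])
    show "(W has_real_derivative A t) (at t within {0..x})" if "t \<in> {0..x}" for t
      unfolding W_def[abs_def] A_def by (rule primitive_window_has_real_derivative[OF Fc \<theta> that])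
  qed (simp_all add: W_def primitive_nonpos)
  show thesis
  proof
    have [measurable]: "f \<in> borel_measurable lborel" using Linf_measurable[OF f] .
    have [measurable]: "F \<in> borel_measurable lborel" "A \<in> borel_measurable lborel"
      by (simp_all add: borel_measurable_continuous_onI Fc Ac)
    have [measurable]: "primitive F \<in> borel_measurable lborel"
      unfolding primitive_def by (rule borel_measurable_set_integral_Icc; measurable)
    have "h \<in> borel_measurable lborel" unfolding h_def[abs_def] W_def by measurable
    moreover have "AE x in lborel. x \<ge> 0 \<longrightarrow> \<bar>h x\<bar> \<le> C + C + 2 * C * \<theta>"
      using C(2)
    proof eventually_elim
      case (elim x)
      show ?case using elim A_bound[of x] W_bound[of x] unfolding h_def by auto
    qed
    ultimately show "h \<in> Linf" by (rule LinfI_AE)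
    show "h x - S_op h x = f x - window_avg f \<theta> x" if "x \<ge> 0" for x
      using S_h[OF that] window_avg_primitive[OF f that, of \<theta>] \<theta> by (simp add: h_def A_def F_def)
  qed
qed

lemma window_avg_diff_S_op_abs_le:
  assumes f: "f \<in> Linf" and C: "AE x in lborel. x \<ge> 0 \<longrightarrow> \<bar>f x\<bar> \<le> C" "C \<ge> 0"
    and \<theta>: "\<theta> > 0" and x: "x \<ge> 0"
  shows "\<bar>window_avg (\<lambda>x. f x - S_op f x) \<theta> x\<bar> \<le> 2 * C / \<theta>"
proof -
  have "\<bar>S_op f (x + \<theta>) - S_op f x\<bar> \<le> 2 * C"
    using S_op_abs_le[OF f C, of x] S_op_abs_le[OF f C, of "x + \<theta>"] x \<theta> by linarith
  then show ?thesis
    using set_integral_Icc_diff_S_op[OF f x] \<theta>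
    by (simp add: window_avg_def abs_divide divide_right_mono)
qed

lemma window_avg_uminus: "window_avg (\<lambda>x. - f x) \<theta> x = - window_avg f \<theta> x"
  by (simp add: window_avg_def set_lebesgue_integral_def)

lemma M1_imp_mean_diff_S_op_eq_0:
  assumes M1: "\<phi> \<in> M1" and f: "f \<in> Linf"
  shows "\<phi> (\<lambda>x. f x - S_op f x) = 0"
proof -
  interpret Linf_mean \<phi> using M1 by unfold_locales (simp add: M1_def)
  obtain C where C: "C \<ge> 0" "AE x in lborel. x \<ge> 0 \<longrightarrow> \<bar>f x\<bar> \<le> C" using LinfE[OF f] by blast
  define g where "g x = f x - S_op f x" for x
  have g: "g \<in> Linf" "(\<lambda>x. - g x) \<in> Linf"
    unfolding g_def by (intro Linf_diff Linf_uminus f S_op_Linf)+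
  have bound: "\<bar>window_avg g \<theta> x\<bar> \<le> 2 * C / \<theta>" if "\<theta> > 0" "x \<ge> 0" for \<theta> x
    unfolding g_def by (rule window_avg_diff_S_op_abs_le[OF f C(2,1) that])
  have "M1_upper g = 0" by (rule M1_upper_eq_0[OF bound])
  moreover have "M1_upper (\<lambda>x. - g x) = 0"
    by (rule M1_upper_eq_0[of _ "2 * C"]) (simp add: window_avg_uminus bound)
  ultimately have "\<phi> g \<le> 0" "\<phi> (\<lambda>x. - g x) \<le> 0"
    using M1 g unfolding M1_def by force+
  then show ?thesis using mean_uminus[OF g(1)] unfolding g_def by simp
qed

context Linf_mean
begin

lemma mean_le_of_eventually_le:
  assumes exp0: "\<phi> (\<lambda>x. exp (- x)) = 0"
    and v: "v \<in> Linf" and ev: "eventually (\<lambda>x. v x \<le> c) at_top"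
  shows "\<phi> v \<le> c"
proof -
  obtain B where B: "B \<ge> 0" "AE x in lborel. x \<ge> 0 \<longrightarrow> \<bar>v x\<bar> \<le> B" using LinfE[OF v] by blast
  obtain X where X: "\<And>x. x \<ge> X \<Longrightarrow> v x \<le> c" using ev by (auto simp: eventually_at_top_linorder)
  \<comment> \<open>\<open>M e\<^sup>-\<^sup>x\<close> dominates \<open>v - c\<close> on the initial segment \<open>[0, X]\<close>, and \<open>\<phi>\<close> ignores it.\<close>
  define M where "M = (B + \<bar>c\<bar>) * exp X"
  have M: "M \<ge> 0" unfolding M_def using B(1) by simp
  have Linf_exp: "(\<lambda>x. M * exp (- x)) \<in> Linf" by (rule Linf_scale[OF Linf_exp_minus])
  have "\<phi> v \<le> \<phi> (\<lambda>x. c + M * exp (- x))"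
  proof (rule mean_mono[OF v Linf_add[OF Linf_const Linf_exp]])
    show "AE x in lborel. x \<ge> 0 \<longrightarrow> v x \<le> c + M * exp (- x)"
      using B(2)
    proof eventually_elim
      case (elim x)
      show ?case
      proof (cases "x \<ge> X")
        case True
        then show ?thesis using X[OF True] M by (simp add: add_increasing2)
      next
        case False
        then have "(B + \<bar>c\<bar>) * 1 \<le> (B + \<bar>c\<bar>) * exp (X - x)"
          using B(1) by (intro mult_left_mono) auto
        also have "\<dots> = M * exp (- x)" by (simp add: M_def exp_diff exp_minus field_simps)
        finally show ?thesis using elim by auto
      qed
    qed
  qed
  also have "\<dots> = c"
    using mean_add[OF Linf_const Linf_exp] mean_scale[OF Linf_exp_minus, of M] mean_const exp0 by simp
  finally show ?thesis .
qed

lemma mean_le_limsup_real: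
  assumes "\<phi> (\<lambda>x. exp (- x)) = 0" and v: "v \<in> Linf" and B: "eventually (\<lambda>x. \<bar>v x\<bar> \<le> B) at_top"
  shows "\<phi> v \<le> limsup_real v"
proof (rule dense_ge)
  fix c assume "limsup_real v < c"
  from eventually_less_limsup_real[OF B this] have "eventually (\<lambda>x. v x \<le> c) at_top"
    by (auto elim!: eventually_mono)
  then show "\<phi> v \<le> c" by (rule mean_le_of_eventually_le[OF assms(1) v])
qed

lemma mean_exp_minus_eq_0:
  assumes "\<forall>f\<in>Linf. \<phi> (\<lambda>x. f x - S_op f x) = 0"
  shows "\<phi> (\<lambda>x. exp (- x)) = 0"
proof -
  have "\<phi> (\<lambda>x. exp (- x)) = \<phi> (\<lambda>x. 1 - S_op (\<lambda>_. 1) x)"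
    by (rule mean_cong[OF Linf_exp_minus Linf_diff[OF Linf_const S_op_Linf[OF Linf_const]]])
       (simp add: S_op_one)
  also have "\<dots> = 0" using bspec[OF assms Linf_const[of 1]] by simp
  finally show ?thesis .
qed

lemma mean_in_M1:
  assumes kill: "\<forall>f\<in>Linf. \<phi> (\<lambda>x. f x - S_op f x) = 0"
  shows "\<phi> \<in> M1"
proof -
  have "\<phi> f \<le> M1_upper f" if f: "f \<in> Linf" for f
  proof (rule tendsto_lowerbound[OF upper_window_mean_tendsto[OF f]])
    obtain C where C: "C \<ge> 0" "AE x in lborel. x \<ge> 0 \<longrightarrow> \<bar>f x\<bar> \<le> C" using LinfE[OF f] by blast
    have le: "\<phi> f \<le> upper_window_mean f \<theta>" if \<theta>: "\<theta> > 0" for \<theta>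
    proof -
      obtain h where h: "h \<in> Linf" "\<And>x. x \<ge> 0 \<Longrightarrow> h x - S_op h x = f x - window_avg f \<theta> x"
        using window_avg_in_range_diff_S_op[OF f \<theta>] by blast
      have "\<phi> (\<lambda>x. h x - S_op h x) = \<phi> (\<lambda>x. f x - window_avg f \<theta> x)"
        by (rule mean_cong) (use h f \<theta> in \<open>auto intro: Linf_diff S_op_Linf window_avg_Linf\<close>)
      then have "\<phi> f = \<phi> (window_avg f \<theta>)"
        using kill h(1) mean_diff[OF f window_avg_Linf[OF f \<theta>]] by auto
      also have "\<dots> \<le> upper_window_mean f \<theta>"
        unfolding upper_window_mean_def
        by (rule mean_le_limsup_real[OF mean_exp_minus_eq_0[OF kill] window_avg_Linf[OF f \<theta>]
              eventually_window_avg_abs_le[OF f C(2,1) \<theta>]])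
      finally show ?thesis .
    qed
    show "eventually (\<lambda>\<theta>. \<phi> f \<le> upper_window_mean f \<theta>) at_top"
      using eventually_gt_at_top[of 0] by eventually_elim (rule le)
  qed simp
  then show ?thesis using is_mean unfolding M1_def by blast
qed

end

theorem theorem3p4:
  fixes \<phi> :: "(real \<Rightarrow> real) \<Rightarrow> real"
  assumes "is_mean \<phi>"
  shows "(\<phi> \<in> M1 \<longleftrightarrow> (\<forall>f\<in>Linf. \<phi> (\<lambda>x. f x - S_op f x) = 0))
       \<and> (\<phi> \<in> M1 \<longleftrightarrow> (\<forall>f\<in>Linf. \<phi> (S_op f) = \<phi> f))"
proof -
  interpret Linf_mean \<phi> by (rule Linf_mean.intro[OF assms])
  have "\<phi> \<in> M1 \<longleftrightarrow> (\<forall>f\<in>Linf. \<phi> (\<lambda>x. f x - S_op f x) = 0)"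
    using M1_imp_mean_diff_S_op_eq_0 mean_in_M1 by blast
  moreover have "(\<forall>f\<in>Linf. \<phi> (\<lambda>x. f x - S_op f x) = 0) \<longleftrightarrow> (\<forall>f\<in>Linf. \<phi> (S_op f) = \<phi> f)"
    using mean_diff[OF _ S_op_Linf] by auto
  ultimately show ?thesis by blast
qed

end
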